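(* Let $N\ge 0$ be an integer, let $\mathcal{H}_N$ be a complex inner-product space of dimension $N+1$ with orthonormal basis $|\Psi_0\rangle,\dots,|\Psi_N\rangle$, and let $\beta_0,\dots,\beta_{N-1}>0$ be real numbers, with $\beta_N=0$. Let $\hat A$ be the linear operator on $\mathcal{H}_N$ defined by $\hat A|\Psi_0\rangle=0$ and $\hat A|\Psi_{n+1}\rangle=\sqrt{\beta_n}\,|\Psi_n\rangle$ for $0\le n\le N-1$, and let $\hat A^\dagger$ be its adjoint, so that $\hat A^\dagger|\Psi_n\rangle=\sqrt{\beta_n}\,|\Psi_{n+1}\rangle$ for $0\le n\le N-1$ and $\hat A^\dagger|\Psi_N\rangle=0$. Then for every integer $m\ge 0$, $$(\hat A+\hat A^\dagger)^m|\Psi_0\rangle=\sum_{l=0}^{[m/2]} c_{m,l}\,(\hat A^\dagger)^{m-2l}|\Psi_0\rangle,$$ where $[\cdot]$ denotes the integer part, $c_{m,0}=1$, and for $l\ge 1$ $$c_{m,l}=\sum_{s_1=0}^{s_0+1}\beta_{s_1}\sum_{s_2=0}^{s_1+1}\beta_{s_2}\cdots\sum_{s_l=0}^{s_{l-1}+1}\beta_{s_l},\qquad s_0\equiv m-2l-1,$$ i.e. $c_{m,l}=\sum_{s_1=0}^{m-2l}\beta_{s_1}\sum_{s_2=0}^{s_1+1}\beta_{s_2}\cdots\sum_{s_l=0}^{s_{l-1}+1}\beta_{s_l}$ (nested sums, each $\beta_{s_j}$ multiplying all inner sums).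
   Context: This is the abstract form of a boson interaction model: the interaction Hamiltonian restricted to a finite-dimensional invariant subspace is $\hat A+\hat A^\dagger$, where the ladder operator $\hat A$ acts by nearest-neighbour transitions with squared matrix elements $\beta_n$. Convention: $\beta_s$ is set to $0$ for all integers $s\ge N$ (such indices only occur in terms that multiply $(\hat A^\dagger)^{k}|\Psi_0\rangle$ with $k>N$, which is the zero vector). *)

theory Defs
  imports Complex_Main
begin

text \<open>Concrete model of H_N: vectors are coordinate functions nat => complex
  (coordinates with respect to the orthonormal basis Psi_0..Psi_N; only the
  coordinates 0..N are ever nonzero).\<close>

definition basis_vec :: "nat \<Rightarrow> (nat \<Rightarrow> complex)" where
  "basis_vec n = (\<lambda>k. if k = n then 1 else 0)"

definition lower_op :: "nat \<Rightarrow> (nat \<Rightarrow> real) \<Rightarrow> (nat \<Rightarrow> complex) \<Rightarrow> (nat \<Rightarrow> complex)" where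
  "lower_op N \<beta> v = (\<lambda>k. if k < N then complex_of_real (sqrt (\<beta> k)) * v (Suc k) else 0)"

definition raise_op :: "nat \<Rightarrow> (nat \<Rightarrow> real) \<Rightarrow> (nat \<Rightarrow> complex) \<Rightarrow> (nat \<Rightarrow> complex)" where
  "raise_op N \<beta> v = (\<lambda>k. if 1 \<le> k \<and> k \<le> N then complex_of_real (sqrt (\<beta> (k - 1))) * v (k - 1) else 0)"

fun nested_sum :: "(nat \<Rightarrow> real) \<Rightarrow> nat \<Rightarrow> nat \<Rightarrow> real" where
  "nested_sum \<beta> 0 s = 1"
| "nested_sum \<beta> (Suc l) s = (\<Sum>t = 0..Suc s. \<beta> t * nested_sum \<beta> l t)"

definition coef_c :: "(nat \<Rightarrow> real) \<Rightarrow> nat \<Rightarrow> nat \<Rightarrow> real" where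
  "coef_c \<beta> m l = (if l = 0 then 1
     else (\<Sum>s1 = 0..m - 2 * l. \<beta> s1 * nested_sum \<beta> (l - 1) s1))"

end

theory Submission
  imports Defs "HOL-Library.Function_Algebras"
begin

text \<open>Write \<open>e\<^sub>j = (A\<^sup>\<dagger>)\<^sup>j \<Psi>\<^sub>0\<close>. The only facts about the operators that matter are linearity,
  \<open>A\<^sup>\<dagger> e\<^sub>j = e\<^sub>j\<^sub>+\<^sub>1\<close>, \<open>A e\<^sub>0 = 0\<close> and the ladder relation \<open>A e\<^sub>j\<^sub>+\<^sub>1 = \<beta>\<^sub>j e\<^sub>j\<close> (the square roots
  combine to \<open>\<beta>\<^sub>j\<close>). Hence applying \<open>A + A\<^sup>\<dagger>\<close> to \<open>\<Sum>\<^sub>l c\<^sub>m\<^sub>,\<^sub>l e\<^sub>m\<^sub>-\<^sub>2\<^sub>l\<close> gives an expansion of the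
  same shape whose coefficients obey \<open>c\<^sub>m\<^sub>+\<^sub>1\<^sub>,\<^sub>l = c\<^sub>m\<^sub>,\<^sub>l + \<beta>\<^sub>m\<^sub>+\<^sub>1\<^sub>-\<^sub>2\<^sub>l c\<^sub>m\<^sub>,\<^sub>l\<^sub>-\<^sub>1\<close>, and the nested sums
  satisfy this recursion: the last term of the outermost sum of \<open>c\<^sub>m\<^sub>+\<^sub>1\<^sub>,\<^sub>l\<close> is
  \<open>\<beta>\<^sub>m\<^sub>+\<^sub>1\<^sub>-\<^sub>2\<^sub>l c\<^sub>m\<^sub>,\<^sub>l\<^sub>-\<^sub>1\<close> and the remaining ones form \<open>c\<^sub>m\<^sub>,\<^sub>l\<close>.\<close>

lemma coef_c_eq_nested_sum:
  assumes "Suc (2 * l) \<le> m"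
  shows "coef_c \<beta> m l = nested_sum \<beta> l (m - Suc (2 * l))"
proof (cases l)
  case (Suc q)
  with assms have "m - 2 * l = Suc (m - Suc (2 * l))" by simp
  with Suc show ?thesis by (simp add: coef_c_def)
qed (simp add: coef_c_def)

lemma coef_c_Suc:
  assumes "2 * l \<le> Suc m"
  shows "coef_c \<beta> (Suc m) l = (if 2 * l \<le> m then coef_c \<beta> m l else 0)
           + (if l = 0 then 0 else \<beta> (Suc m - 2 * l) * coef_c \<beta> m (l - 1))"
proof (cases l)
  case (Suc q)
  with assms have prev: "coef_c \<beta> m q = nested_sum \<beta> q (Suc m - 2 * l)"
    by (simp add: coef_c_eq_nested_sum)
  show ?thesis
  proof (cases "2 * l \<le> m")
    case True
    then have "Suc m - 2 * l = Suc (m - 2 * l)" by simp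
    with True Suc prev show ?thesis by (simp add: coef_c_def)
  next
    case False
    with assms have "Suc m - 2 * l = 0" by simp
    with False Suc prev show ?thesis by (simp add: coef_c_def)
  qed
qed (simp add: coef_c_def)

lemma ladder_lower_raise_pow:
  fixes s :: "real \<Rightarrow> 'v::ab_group_add \<Rightarrow> 'v"
  assumes L: "module_hom s s L" and R: "module_hom s s R"
    and nonneg: "\<And>n. 0 \<le> \<beta> n"
    and raise: "\<And>n. R (b n) = s (sqrt (\<beta> n)) (b (Suc n))"
    and lower: "\<And>n. L (b (Suc n)) = s (sqrt (\<beta> n)) (b n)"
  shows "L ((R ^^ Suc j) (b 0)) = s (\<beta> j) ((R ^^ j) (b 0))"
proof -
  interpret L: module_hom s s L by (fact L)
  interpret R: module_hom s s R by (fact R)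
  have pow: "(R ^^ j) (b 0) = s (sqrt (\<Prod>i<j. \<beta> i)) (b j)" for j
    by (induction j) (simp_all add: R.scale raise real_sqrt_mult mult.commute)
  have "sqrt (\<Prod>i<Suc j. \<beta> i) * sqrt (\<beta> j) = \<beta> j * sqrt (\<Prod>i<j. \<beta> i)"
    using nonneg by (simp add: real_sqrt_mult prod_nonneg)
  then show ?thesis
    unfolding pow[of "Suc j"] pow[of j] L.scale lower by simp
qed

lemma ladder_power_expansion:
  fixes s :: "real \<Rightarrow> 'v::ab_group_add \<Rightarrow> 'v"
  assumes L: "module_hom s s L" and R: "module_hom s s R"
    and lower_vac: "L v\<^sub>0 = 0"
    and lower_raise: "\<And>j. L ((R ^^ Suc j) v\<^sub>0) = s (\<beta> j) ((R ^^ j) v\<^sub>0)"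
  shows "((\<lambda>v. L v + R v) ^^ m) v\<^sub>0
           = (\<Sum>l = 0..m div 2. s (coef_c \<beta> m l) ((R ^^ (m - 2 * l)) v\<^sub>0))"
proof (induction m)
  case 0
  interpret module s using L by (simp add: module_hom_iff)
  show ?case by (simp add: coef_c_def)
next
  case (Suc m)
  interpret L: module_hom s s L by (fact L)
  interpret R: module_hom s s R by (fact R)
  define e where "e j = (R ^^ j) v\<^sub>0" for j
  define c where "c = coef_c \<beta>"
  define x where "x = (\<Sum>l = 0..m div 2. s (c m l) (e (m - 2 * l)))"
  let ?K = "Suc m div 2"
  have "R x = (\<Sum>l = 0..m div 2. s (if 2 * l \<le> m then c m l else 0) (e (Suc m - 2 * l)))"
    by (auto simp: x_def R.sum R.scale e_def Suc_diff_le intro!: sum.cong)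
  also have "\<dots> = (\<Sum>l = 0..?K. s (if 2 * l \<le> m then c m l else 0) (e (Suc m - 2 * l)))"
    by (rule sum.mono_neutral_left) auto
  finally have raise_part: "R x = \<dots>" .
  have lower_e: "L (e j) = (if j = 0 then 0 else s (\<beta> (j - 1)) (e (j - 1)))" for j
    by (cases j) (simp_all add: e_def lower_vac lower_raise del: funpow.simps)
  have "L x = (\<Sum>l = 0..m div 2. if 2 * l < m
                 then s (\<beta> (m - Suc (2 * l)) * c m l) (e (m - Suc (2 * l))) else 0)"
    unfolding x_def L.sum L.scale lower_e
    by (intro sum.cong refl) (simp add: Suc_diff_Suc[symmetric] mult.commute)
  also have "\<dots> = (\<Sum>l<?K. s (\<beta> (m - Suc (2 * l)) * c m l) (e (m - Suc (2 * l))))"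
    unfolding sum.inter_filter[symmetric, OF finite_atLeastAtMost]
    by (rule sum.cong) auto
  also have "\<dots> = (\<Sum>l = 0..?K. s (if l = 0 then 0 else \<beta> (Suc m - 2 * l) * c m (l - 1))
                                  (e (Suc m - 2 * l)))"
    by (simp add: atLeast0AtMost sum.atMost_shift)
  finally have lower_part: "L x = \<dots>" .
  have "((\<lambda>v. L v + R v) ^^ Suc m) v\<^sub>0 = L x + R x"
    using Suc.IH by (simp add: x_def e_def c_def)
  also have "\<dots> = (\<Sum>l = 0..?K. s (c (Suc m) l) (e (Suc m - 2 * l)))"
    unfolding raise_part lower_part sum.distrib[symmetric] c_def
    by (rule sum.cong) (auto simp: coef_c_Suc L.m1.scale_left_distrib)
  finally show ?case by (simp only: e_def c_def)
qed

definition coord_scale :: "real \<Rightarrow> (nat \<Rightarrow> complex) \<Rightarrow> nat \<Rightarrow> complex" where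
  "coord_scale r v = (\<lambda>k. complex_of_real r * v k)"

lemma module_coord_scale: "module coord_scale"
  by unfold_locales (auto simp: coord_scale_def fun_eq_iff algebra_simps)

lemma module_hom_lower_op: "module_hom coord_scale coord_scale (lower_op N \<beta>)"
  by (auto simp: module_hom_iff module_coord_scale lower_op_def coord_scale_def fun_eq_iff
      algebra_simps)

lemma module_hom_raise_op: "module_hom coord_scale coord_scale (raise_op N \<beta>)"
  by (auto simp: module_hom_iff module_coord_scale raise_op_def coord_scale_def fun_eq_iff
      algebra_simps)

lemma raise_op_basis_vec:
  assumes "\<And>s. N \<le> s \<Longrightarrow> \<beta> s = 0"
  shows "raise_op N \<beta> (basis_vec n) = coord_scale (sqrt (\<beta> n)) (basis_vec (Suc n))"
  using assms by (auto simp: raise_op_def basis_vec_def coord_scale_def fun_eq_iff)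

lemma lower_op_basis_vec_Suc:
  assumes "\<And>s. N \<le> s \<Longrightarrow> \<beta> s = 0"
  shows "lower_op N \<beta> (basis_vec (Suc n)) = coord_scale (sqrt (\<beta> n)) (basis_vec n)"
  using assms by (auto simp: lower_op_def basis_vec_def coord_scale_def fun_eq_iff)

lemma lower_op_basis_vec_0: "lower_op N \<beta> (basis_vec 0) = 0"
  by (simp add: lower_op_def basis_vec_def fun_eq_iff)

lemma sum_fun_apply: "(\<Sum>a\<in>A. f a) x = (\<Sum>a\<in>A. f a x)"
  by (induction A rule: infinite_finite_induct) auto

theorem theorem1:
  fixes N :: nat and \<beta> :: "nat \<Rightarrow> real" and m :: nat
  assumes pos: "\<And>n. n < N \<Longrightarrow> \<beta> n > 0"
    and zero: "\<And>s. N \<le> s \<Longrightarrow> \<beta> s = 0"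
  shows "((\<lambda>v. (\<lambda>k. lower_op N \<beta> v k + raise_op N \<beta> v k)) ^^ m) (basis_vec 0)
       = (\<lambda>k. \<Sum>l = 0..m div 2. complex_of_real (coef_c \<beta> m l)
                 * ((raise_op N \<beta> ^^ (m - 2 * l)) (basis_vec 0)) k)"
proof -
  have nonneg: "0 \<le> \<beta> n" for n
    using pos[of n] zero[of n] by linarith
  note L = module_hom_lower_op[of N \<beta>] and R = module_hom_raise_op[of N \<beta>]
  have raise: "raise_op N \<beta> (basis_vec n) = coord_scale (sqrt (\<beta> n)) (basis_vec (Suc n))" for n
    using zero by (rule raise_op_basis_vec)
  have lower: "lower_op N \<beta> (basis_vec (Suc n)) = coord_scale (sqrt (\<beta> n)) (basis_vec n)" for n
    using zero by (rule lower_op_basis_vec_Suc)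
  have "lower_op N \<beta> ((raise_op N \<beta> ^^ Suc j) (basis_vec 0))
      = coord_scale (\<beta> j) ((raise_op N \<beta> ^^ j) (basis_vec 0))" for j
    by (rule ladder_lower_raise_pow[where b = basis_vec, OF L R nonneg raise lower])
  then have "((\<lambda>v. lower_op N \<beta> v + raise_op N \<beta> v) ^^ m) (basis_vec 0)
      = (\<Sum>l = 0..m div 2. coord_scale (coef_c \<beta> m l) ((raise_op N \<beta> ^^ (m - 2 * l)) (basis_vec 0)))"
    by (rule ladder_power_expansion[OF L R lower_op_basis_vec_0])
  then show ?thesis
    by (simp add: plus_fun_def fun_eq_iff sum_fun_apply coord_scale_def)
qed

end
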